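(* Let $(X,d)$ be a compact metric space, $\epsilon>0$, and $A$ an $\epsilon$-approximation of $X$. Then the map $p:X\to\mathcal{U}_{4\epsilon}(A)$ given by $p(x)=\{a\in A\mid d(x,a)=d(x,A)\}$ is well-defined and continuous.
   Context: A finite set $A\subset X$ is an $\epsilon$-approximation of $X$ if for every $x\in X$ there is $a\in A$ with $d(x,a)<\epsilon$. $\mathcal{U}_{4\epsilon}(A)=\{C\subseteq A\mid C\neq\emptyset,\ \mathrm{diam}(C)<4\epsilon\}$, a finite poset under inclusion regarded as a finite $T_0$ space whose open sets are the down-sets. $d(x,A)=\min_{a\in A}d(x,a)$. *)

theory Defs
  imports "HOL-Analysis.Analysis"
begin

definition eps_approx :: "'a::metric_space set \<Rightarrow> real \<Rightarrow> 'a set \<Rightarrow> bool" where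
  "eps_approx X eps A \<longleftrightarrow> finite A \<and> A \<subseteq> X \<and> (\<forall>x\<in>X. \<exists>a\<in>A. dist x a < eps)"

definition U_sets :: "real \<Rightarrow> 'a::metric_space set \<Rightarrow> 'a set set" where
  "U_sets r A = {C. C \<subseteq> A \<and> C \<noteq> {} \<and> diameter C < r}"

definition dist_set :: "'a::metric_space \<Rightarrow> 'a set \<Rightarrow> real" where
  "dist_set x A = Min ((\<lambda>a. dist x a) ` A)"

text \<open>A family of sets ordered by inclusion, as a finite T0 space whose open sets are the down-sets.\<close>
definition downset_topology :: "'b set set \<Rightarrow> 'b set topology" where
  "downset_topology U = topology (\<lambda>S. S \<subseteq> U \<and> (\<forall>C\<in>S. \<forall>D\<in>U. D \<subseteq> C \<longrightarrow> D \<in> S))"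

lemma istopology_downset:
  "istopology (\<lambda>S. S \<subseteq> U \<and> (\<forall>C\<in>S. \<forall>D\<in>U. D \<subseteq> C \<longrightarrow> D \<in> S))"
  unfolding istopology_def by blast

lemma openin_downset_topology:
  "openin (downset_topology U) S \<longleftrightarrow> S \<subseteq> U \<and> (\<forall>C\<in>S. \<forall>D\<in>U. D \<subseteq> C \<longrightarrow> D \<in> S)"
  unfolding downset_topology_def topology_inverse'[OF istopology_downset] by (rule refl)

end

theory Submission
  imports Defs
begin

text \<open>A nearest point of \<open>x\<close> in \<open>A\<close> is within \<open>d(x,A) < \<epsilon>\<close> of \<open>x\<close>, so any two of them are
  less than \<open>2\<epsilon>\<close> apart. For continuity, the open sets of the target are the down-sets, so
  it suffices that near \<open>x\<close> the set of nearest points can only shrink: if \<open>b\<close> is nearest to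
  \<open>x\<close> and \<open>a\<close> is not, the strict inequality \<open>d(y,b) < d(y,a)\<close> persists for \<open>y\<close> near \<open>x\<close>.\<close>

definition nearest_points :: "'a::metric_space \<Rightarrow> 'a set \<Rightarrow> 'a set" where
  "nearest_points x A = {a\<in>A. dist x a = dist_set x A}"

lemma dist_set_le:
  assumes "finite A" "a \<in> A"
  shows "dist_set x A \<le> dist x a"
  using assms unfolding dist_set_def by simp

lemma dist_set_attained:
  assumes "finite A" "A \<noteq> {}"
  obtains a where "a \<in> A" "dist x a = dist_set x A"
proof -
  have "dist_set x A \<in> (\<lambda>a. dist x a) ` A"
    unfolding dist_set_def using assms by (intro Min_in) auto
  then show thesis using that by auto
qed

lemma nearest_points_nonempty:
  assumes "finite A" "A \<noteq> {}"
  shows "nearest_points x A \<noteq> {}"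
  using dist_set_attained[OF assms] unfolding nearest_points_def by blast

lemma diameter_le:
  fixes S :: "'a::metric_space set"
  assumes "S \<noteq> {}" and "\<And>x y. x \<in> S \<Longrightarrow> y \<in> S \<Longrightarrow> dist x y \<le> d"
  shows "diameter S \<le> d"
  using assms by (auto simp: diameter_def intro: cSUP_least)

lemma diameter_nearest_points_le:
  assumes "finite A" "A \<noteq> {}"
  shows "diameter (nearest_points x A) \<le> 2 * dist_set x A"
proof (rule diameter_le[OF nearest_points_nonempty[OF assms]])
  fix u v assume "u \<in> nearest_points x A" "v \<in> nearest_points x A"
  then have "dist x u = dist_set x A" "dist x v = dist_set x A"
    unfolding nearest_points_def by auto
  moreover have "dist u v \<le> dist x u + dist x v"
    by (metis dist_commute dist_triangle)
  ultimately show "dist u v \<le> 2 * dist_set x A" by linarith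
qed

lemma nearest_points_in_U_sets:
  assumes "eps_approx X eps A" "x \<in> X"
  shows "nearest_points x A \<in> U_sets (4 * eps) A"
proof -
  have "finite A" using assms(1) unfolding eps_approx_def by blast
  obtain a where a: "a \<in> A" "dist x a < eps"
    using assms unfolding eps_approx_def by blast
  then have "A \<noteq> {}" by blast
  have "0 \<le> dist_set x A"
    using dist_set_attained[OF \<open>finite A\<close> \<open>A \<noteq> {}\<close>] by (metis zero_le_dist)
  moreover have "dist_set x A < eps"
    using dist_set_le[OF \<open>finite A\<close> a(1), of x] a(2) by linarith
  ultimately have "diameter (nearest_points x A) < 4 * eps"
    using diameter_nearest_points_le[OF \<open>finite A\<close> \<open>A \<noteq> {}\<close>, of x] by linarith
  then show ?thesis
    using nearest_points_nonempty[OF \<open>finite A\<close> \<open>A \<noteq> {}\<close>]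
    unfolding U_sets_def nearest_points_def by auto
qed

lemma eventually_nearest_points_subset:
  assumes "finite A"
  shows "eventually (\<lambda>y. nearest_points y A \<subseteq> nearest_points x A) (nhds x)"
proof (cases "A = {}")
  case True
  then show ?thesis by (simp add: nearest_points_def)
next
  case False
  obtain b where b: "b \<in> A" "dist x b = dist_set x A"
    using dist_set_attained[OF assms False] .
  have "eventually (\<lambda>y. dist y b < dist y a) (nhds x)" if "a \<in> A - nearest_points x A" for a
  proof -
    have "dist x b < dist x a"
      using that b(2) dist_set_le[OF assms, of a x] unfolding nearest_points_def by auto
    moreover have "open {y. dist y b < dist y a}"
      by (intro open_Collect_less continuous_intros)
    ultimately show ?thesis
      using eventually_nhds_in_open[of "{y. dist y b < dist y a}" x] by simp
  qed
  then have "eventually (\<lambda>y. \<forall>a\<in>A - nearest_points x A. dist y b < dist y a) (nhds x)"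
    using assms by (simp add: eventually_ball_finite_distrib)
  then show ?thesis
  proof (rule eventually_mono, safe)
    fix y a
    assume closer: "\<forall>a\<in>A - nearest_points x A. dist y b < dist y a"
      and a: "a \<in> nearest_points y A"
    show "a \<in> nearest_points x A"
    proof (rule ccontr)
      assume "a \<notin> nearest_points x A"
      with a closer have "dist y b < dist y a" unfolding nearest_points_def by blast
      with a dist_set_le[OF assms b(1), of y] show False unfolding nearest_points_def by auto
    qed
  qed
qed

lemma topspace_downset_topology: "topspace (downset_topology U) = U"
  unfolding topspace_def openin_downset_topology by blast

lemma continuous_map_downset_topologyI:
  assumes "\<And>x. x \<in> topspace T \<Longrightarrow> f x \<in> U"
    and "\<And>x. x \<in> topspace T \<Longrightarrow> \<exists>V. openin T V \<and> x \<in> V \<and> (\<forall>y\<in>V. f y \<subseteq> f x)"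
  shows "continuous_map T (downset_topology U) f"
  unfolding continuous_map_def topspace_downset_topology
proof (intro conjI allI impI funcsetI)
  fix x assume "x \<in> topspace T"
  then show "f x \<in> U" by (rule assms(1))
next
  fix S assume S: "openin (downset_topology U) S"
  show "openin T {x \<in> topspace T. f x \<in> S}"
  proof (subst openin_subopen, intro ballI)
    fix x assume x: "x \<in> {x \<in> topspace T. f x \<in> S}"
    then obtain V where V: "openin T V" "x \<in> V" "\<forall>y\<in>V. f y \<subseteq> f x"
      using assms(2) by blast
    have "V \<subseteq> {x \<in> topspace T. f x \<in> S}"
    proof safe
      fix y assume "y \<in> V"
      then show "y \<in> topspace T" using openin_subset[OF V(1)] by blast
      then have "f y \<in> U" by (rule assms(1))
      moreover have "f y \<subseteq> f x" using V(3) \<open>y \<in> V\<close> by blast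
      ultimately show "f y \<in> S"
        using S x unfolding openin_downset_topology by blast
    qed
    with V show "\<exists>V. openin T V \<and> x \<in> V \<and> V \<subseteq> {x \<in> topspace T. f x \<in> S}" by blast
  qed
qed

theorem lemma4p1:
  fixes X A :: "'a::metric_space set" and eps :: real
  assumes "compact X" and "eps > 0" and "eps_approx X eps A"
  defines "p \<equiv> (\<lambda>x. {a\<in>A. dist x a = dist_set x A})"
  shows "(\<forall>x\<in>X. p x \<in> U_sets (4 * eps) A)
       \<and> continuous_map (top_of_set X) (downset_topology (U_sets (4 * eps) A)) p"
proof -
  have p: "p = (\<lambda>x. nearest_points x A)"
    unfolding p_def nearest_points_def by simp
  have "finite A" using assms(3) unfolding eps_approx_def by blast
  have well_defined: "\<forall>x\<in>X. p x \<in> U_sets (4 * eps) A"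
    unfolding p using nearest_points_in_U_sets[OF assms(3)] by blast
  have "\<exists>V. openin (top_of_set X) V \<and> x \<in> V \<and> (\<forall>y\<in>V. p y \<subseteq> p x)"
    if "x \<in> X" for x
  proof -
    obtain N where "open N" "x \<in> N" "\<forall>y\<in>N. p y \<subseteq> p x"
      using eventually_nearest_points_subset[OF \<open>finite A\<close>, of x]
      unfolding p eventually_nhds by blast
    with \<open>x \<in> X\<close> show ?thesis by (intro exI[of _ "X \<inter> N"]) auto
  qed
  with well_defined show ?thesis
    by (auto intro!: continuous_map_downset_topologyI)
qed

end
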